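(* Let $q$ be a prime power, $1\le k<n$, let $g_1,\dots,g_n\in\mathbb{F}_{q^n}$ be linearly independent over $\mathbb{F}_q$, and let $\mathcal{G}$ be the Gabidulin code over $\mathbb{F}_{q^n}$ (so $m=n$) of dimension $k$ with respect to $g_1,\dots,g_n$. Let $f(x)=x^{q^{n-1}}+f_{\le k-1}(x)$, where $f_{\le k-1}\in\mathcal{L}_q(x,\mathbb{F}_{q^n})$ is zero or has $q$-degree at most $k-1$. Then $\sigma_f=(f(g_1),\dots,f(g_n))$ is a deep hole of $\mathcal{G}$ in the rank metric, i.e. $d_R(\sigma_f,\mathcal{G})=n-k$.
   Context: $\mathcal{L}_q(x,\mathbb{F}_{q^n})$ is the set of $q$-linearized polynomials $\sum_i a_ix^{q^i}$ with $a_i\in\mathbb{F}_{q^n}$, $q$-degree being the largest $i$ with $a_i\ne0$. Rank distance: $d_R(\mathbf{u},\mathbf{v})=\dim_{\mathbb{F}_q}\langle u_1-v_1,\dots,u_n-v_n\rangle$, $d_R(\mathbf{u},C)=\min_{\mathbf{c}\in C}d_R(\mathbf{u},\mathbf{c})$; a deep hole is a word attaining the covering radius $\max_{\mathbf{u}}d_R(\mathbf{u},C)$, which for $\mathcal{G}$ is $n-k$. The Gabidulin code of dimension $k$ is $\mathcal{G}=\{(v(g_1),\dots,v(g_n)) : v\in\mathcal{L}_q(x,\mathbb{F}_{q^n}),\ v=0\text{ or }\deg_q(v)<k\}$. *)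

theory Defs
  imports "HOL-Computational_Algebra.Primes"
begin

(* The finite field F_{q^n} is modelled by a finite field type 'a with CARD('a) = q^n.
   Its subfield F_q is the set of roots of x^q - x. *)
definition Fq :: "nat \<Rightarrow> 'a::field set" where
  "Fq q = {x. x ^ q = x}"

definition prime_power :: "nat \<Rightarrow> bool" where
  "prime_power q \<longleftrightarrow> (\<exists>p r. prime p \<and> r > 0 \<and> q = p ^ r)"

definition Fq_span :: "nat \<Rightarrow> 'a::field set \<Rightarrow> 'a set" where
  "Fq_span q S = {x. \<exists>T c. finite T \<and> T \<subseteq> S \<and> (\<forall>t\<in>T. c t \<in> Fq q) \<and> x = (\<Sum>t\<in>T. c t * t)}"

definition Fq_dim :: "nat \<Rightarrow> 'a::field set \<Rightarrow> nat" where
  "Fq_dim q S = (LEAST d. \<exists>xs. length xs = d \<and> Fq_span q (set xs) = Fq_span q S)"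

definition Fq_lin_indep :: "nat \<Rightarrow> nat \<Rightarrow> (nat \<Rightarrow> 'a::field) \<Rightarrow> bool" where
  "Fq_lin_indep q n g \<longleftrightarrow>
     (\<forall>c. (\<forall>i<n. c i \<in> Fq q) \<and> (\<Sum>i<n. c i * g i) = 0 \<longrightarrow> (\<forall>i<n. c i = 0))"

(* q-linearized polynomial with coefficient function a (finite support), evaluated at x *)
definition lin_eval :: "nat \<Rightarrow> (nat \<Rightarrow> 'a::field) \<Rightarrow> 'a \<Rightarrow> 'a" where
  "lin_eval q a x = (\<Sum>i\<in>{i. a i \<noteq> 0}. a i * x ^ (q ^ i))"

definition qdeg_less :: "(nat \<Rightarrow> 'a::zero) \<Rightarrow> nat \<Rightarrow> bool" where
  "qdeg_less a k \<longleftrightarrow> (\<forall>i\<ge>k. a i = 0)"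

(* words of length n are functions nat => 'a, only indices < n matter *)
definition rank_dist :: "nat \<Rightarrow> nat \<Rightarrow> (nat \<Rightarrow> 'a::field) \<Rightarrow> (nat \<Rightarrow> 'a) \<Rightarrow> nat" where
  "rank_dist q n u v = Fq_dim q {u i - v i | i. i < n}"

definition rank_dist_code :: "nat \<Rightarrow> nat \<Rightarrow> (nat \<Rightarrow> 'a::field) \<Rightarrow> (nat \<Rightarrow> 'a) set \<Rightarrow> nat" where
  "rank_dist_code q n u C = Min {rank_dist q n u c | c. c \<in> C}"

definition gabidulin :: "nat \<Rightarrow> nat \<Rightarrow> nat \<Rightarrow> (nat \<Rightarrow> 'a::field) \<Rightarrow> (nat \<Rightarrow> 'a) set" where
  "gabidulin q n k g = {(\<lambda>i. if i < n then lin_eval q a (g i) else 0) | a.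
        finite {i. a i \<noteq> 0} \<and> qdeg_less a k}"

end

(* A codeword comes from some L of q-degree < k, and sigma_f minus it is the evaluation of
   h(x) = x^(q^(n-1)) + L(x) at the basis g_1, ..., g_n.  Since h is F_q-linear, the rank distance is
   the F_q-dimension of the image of h, and because h(x)^q = x + L(x)^q is a nonzero linearized
   polynomial of q-degree at most k, the kernel of h has at most q^k elements; hence the distance
   is at least n - k.  Conversely, interpolating sigma_f at g_1, ..., g_k by some L of q-degree < k
   yields a codeword at rank distance at most n - k. *)

theory Submission
  imports Defs "HOL-Computational_Algebra.Polynomial" "HOL-Library.FuncSet"
    "HOL-Number_Theory.Residues"
begin

text \<open>The library's \<open>finite_field_power_card_eq_same\<close> needs sort \<open>finite_field\<close>, which a type
  variable of sort \<open>{field,finite}\<close> cannot be shown to have.\<close>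
lemma finite_field_power_card_eq_self:
  fixes x :: "'a::{field,finite}"
  shows "x ^ card (UNIV :: 'a set) = x"
proof (cases "x = 0")
  case False
  define G :: "'a monoid" where "G = \<lparr>carrier = UNIV - {0}, monoid.mult = (*), one = 1\<rparr>"
  interpret group G
  proof (rule groupI)
    fix y assume "y \<in> carrier G"
    thus "\<exists>z\<in>carrier G. z \<otimes>\<^bsub>G\<^esub> y = \<one>\<^bsub>G\<^esub>"
      by (intro bexI[of _ "inverse y"]) (auto simp: G_def)
  qed (auto simp: G_def mult.assoc)
  have pow: "y [^]\<^bsub>G\<^esub> m = y ^ m" for y :: 'a and m :: nat
    by (induction m) (auto simp: G_def)
  have "order G = card (UNIV :: 'a set) - 1"
    by (simp add: order_def G_def card_Diff_singleton)
  moreover have "x \<in> carrier G" using False by (simp add: G_def)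
  ultimately have "x ^ (card (UNIV :: 'a set) - 1) = 1"
    using pow_order_eq_1[of x] unfolding pow by (simp add: G_def)
  then have "x * x ^ (card (UNIV :: 'a set) - 1) = x" by simp
  moreover have "card (UNIV :: 'a set) = Suc (card (UNIV :: 'a set) - 1)"
    using finite_UNIV_card_ge_0[where 'a='a] by simp
  ultimately show ?thesis by (metis power_Suc)
qed (simp add: finite_UNIV_card_ge_0)

text \<open>Counting over the fibres of an additive map, all of which are translates of its kernel.\<close>
lemma card_UNIV_le_card_range_mult_card_kernel:
  fixes h :: "'a::{ab_group_add,finite} \<Rightarrow> 'b::ab_group_add"
  assumes add: "\<And>x y. h (x + y) = h x + h y"
  shows "card (UNIV :: 'a set) \<le> card (range h) * card {x. h x = 0}"
proof -
  have "UNIV = (\<Union>y\<in>range h. h -` {y})" by auto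
  hence "card (UNIV :: 'a set) \<le> (\<Sum>y\<in>range h. card (h -` {y}))"
    using card_UN_le[of "range h" "\<lambda>y. h -` {y}"] by simp
  also have "\<dots> \<le> card (range h) * card {x. h x = 0}"
  proof (rule sum_bounded_above[where K = "card {x. h x = 0}", simplified])
    fix y assume "y \<in> range h"
    then obtain x0 where y: "y = h x0" by auto
    have "h (x - x0) = h x - h x0" for x
      using add[of "x - x0" x0] by (simp add: algebra_simps)
    hence "(\<lambda>x. x - x0) ` (h -` {y}) \<subseteq> {x. h x = 0}" using y by auto
    moreover have "inj_on (\<lambda>x. x - x0) (h -` {y})" by (auto simp: inj_on_def)
    ultimately show "card (h -` {y}) \<le> card {x. h x = 0}"
      by (intro card_inj_on_le) auto
  qed
  finally show ?thesis .
qed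

definition linpoly :: "nat \<Rightarrow> (nat \<Rightarrow> 'a::field) \<Rightarrow> nat \<Rightarrow> 'a \<Rightarrow> 'a" where
  "linpoly q c m x = (\<Sum>j<m. c j * x ^ (q ^ j))"

lemma lin_eval_eq_linpoly:
  assumes "qdeg_less a k"
  shows "lin_eval q a x = linpoly q a k x"
proof -
  have "{i. a i \<noteq> 0} \<subseteq> {..<k}" using assms by (auto simp: qdeg_less_def intro: leI)
  thus ?thesis unfolding lin_eval_def linpoly_def by (intro sum.mono_neutral_left) auto
qed

lemma linpoly_diff: "linpoly q (\<lambda>j. a j - b j) m x = linpoly q a m x - linpoly q b m x"
  by (simp add: linpoly_def left_diff_distrib sum_subtractf)

lemma card_linpoly_roots_le:
  fixes c :: "nat \<Rightarrow> 'a::field"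
  assumes q: "2 \<le> q" and "j0 < m" and "c j0 \<noteq> 0"
  shows "card {x. linpoly q c m x = 0} \<le> q ^ (m - 1)"
proof -
  define P where "P = (\<Sum>j<m. Polynomial.monom (c j) (q ^ j))"
  have eval: "poly P x = linpoly q c m x" for x
    by (simp add: P_def linpoly_def poly_sum poly_monom)
  have "Polynomial.coeff P (q ^ j0) = (\<Sum>j<m. if j = j0 then c j else 0)"
    unfolding P_def Polynomial.coeff_sum Polynomial.coeff_monom
    using q by (intro sum.cong) auto
  also have "\<dots> = c j0" using \<open>j0 < m\<close> by simp
  finally have "P \<noteq> 0" using \<open>c j0 \<noteq> 0\<close> by auto
  have "degree P \<le> q ^ (m - 1)"
  proof (rule degree_le, intro allI impI)
    fix i assume i: "q ^ (m - 1) < i"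
    have "q ^ j \<noteq> i" if "j < m" for j
      using i power_increasing[of j "m - 1" q] that q by auto
    thus "Polynomial.coeff P i = 0"
      unfolding P_def Polynomial.coeff_sum Polynomial.coeff_monom by auto
  qed
  with card_poly_roots_bound[OF \<open>P \<noteq> 0\<close>] show ?thesis by (simp add: eval)
qed

lemma Fq_dim_le_length:
  "Fq_span q (set xs) = Fq_span q S \<Longrightarrow> Fq_dim q S \<le> length xs"
  unfolding Fq_dim_def by (rule Least_le) auto

lemma Fq_dim_spanning_list:
  assumes "finite S"
  obtains xs where "length xs = Fq_dim q S" "Fq_span q (set xs) = Fq_span q S"
proof -
  obtain ys where "set ys = S" using finite_list[OF assms] by blast
  hence "\<exists>d xs. length xs = d \<and> Fq_span q (set xs) = Fq_span q S" by blast
  hence "\<exists>xs. length xs = Fq_dim q S \<and> Fq_span q (set xs) = Fq_span q S"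
    unfolding Fq_dim_def by (rule LeastI_ex)
  thus ?thesis using that by blast
qed

lemma rank_dist_le: "rank_dist q n u v \<le> n"
proof -
  have "set (map (\<lambda>i. u i - v i) [0..<n]) = {u i - v i | i. i < n}" by auto
  thus ?thesis unfolding rank_dist_def
    using Fq_dim_le_length[of q "map (\<lambda>i. u i - v i) [0..<n]"] by simp
qed

lemma rank_dist_code_eqI:
  assumes "\<And>c. c \<in> C \<Longrightarrow> d \<le> rank_dist q n u c"
    and "c0 \<in> C" and "rank_dist q n u c0 \<le> d"
  shows "rank_dist_code q n u C = d"
  unfolding rank_dist_code_def
proof (rule Min_eqI)
  have "{rank_dist q n u c | c. c \<in> C} \<subseteq> {..n}" using rank_dist_le by auto
  thus "finite {rank_dist q n u c | c. c \<in> C}" by (rule finite_subset) simp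
  show "d \<le> y" if "y \<in> {rank_dist q n u c | c. c \<in> C}" for y using that assms(1) by auto
  have "rank_dist q n u c0 = d" using assms by (simp add: le_antisym)
  thus "d \<in> {rank_dist q n u c | c. c \<in> C}" using assms(2) by blast
qed

lemma Fq_span_0: "0 \<in> Fq_span q S"
  unfolding Fq_span_def by (intro CollectI exI[of _ "{}"]) auto

lemma Fq_span_insert_0: "Fq_span q (insert 0 S) = Fq_span q S"
proof
  show "Fq_span q S \<subseteq> Fq_span q (insert 0 S)" unfolding Fq_span_def by blast
next
  show "Fq_span q (insert 0 S) \<subseteq> Fq_span q S"
  proof
    fix x assume "x \<in> Fq_span q (insert 0 S)"
    then obtain T c where 1: "finite T" "T \<subseteq> insert 0 S" "\<forall>t\<in>T. c t \<in> Fq q" "x = (\<Sum>t\<in>T. c t * t)"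
      unfolding Fq_span_def by blast
    have "x = (\<Sum>t\<in>T - {0}. c t * t)" unfolding 1(4)
      by (rule sum.mono_neutral_right) (use 1 in auto)
    thus "x \<in> Fq_span q S" unfolding Fq_span_def using 1
      by (intro CollectI exI[of _ "T - {0}"] exI[of _ c]) auto
  qed
qed

definition Fq_linear :: "nat \<Rightarrow> ('a::field \<Rightarrow> 'a) \<Rightarrow> bool" where
  "Fq_linear q h \<longleftrightarrow> (\<forall>x y. h (x + y) = h x + h y) \<and> (\<forall>c x. c \<in> Fq q \<longrightarrow> h (c * x) = c * h x)"

lemma Fq_linear_sum:
  assumes "Fq_linear q h" and "finite A" and "\<forall>i\<in>A. c i \<in> Fq q"
  shows "h (\<Sum>i\<in>A. c i * v i) = (\<Sum>i\<in>A. c i * h (v i))"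
  using assms(2,3)
proof (induction A rule: finite_induct)
  case empty
  have "h 0 = h 0 + h 0" using assms(1) unfolding Fq_linear_def by (metis add_0)
  thus ?case by (metis add_cancel_right_right sum.empty)
next
  case (insert x F)
  thus ?case using assms(1) by (simp add: Fq_linear_def)
qed

locale Fqn_field =
  fixes q n :: nat and field_type :: "'a::{field,finite} itself"
  assumes prime_power_q: "prime_power q" and card_UNIV: "card (UNIV :: 'a set) = q ^ n"
begin

lemma prime_CHAR: "prime CHAR('a)"
  by (rule prime_CHAR_semidom) (simp add: finite_imp_CHAR_pos)

lemma q_power_eq_CHAR_power: "\<exists>e. q ^ i = CHAR('a) ^ e"
proof -
  obtain p r where p: "prime p" "r > 0" "q = p ^ r"
    using prime_power_q unfolding prime_power_def by blast
  have "CHAR('a) dvd p ^ (r * n)"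
    using CHAR_dvd_CARD[where 'a='a] card_UNIV p(3) by (simp add: power_mult)
  hence "CHAR('a) = p"
    using prime_CHAR p(1) prime_dvd_power primes_dvd_imp_eq by blast
  thus ?thesis using p(3) by (metis power_mult)
qed

lemma q_ge_2: "2 \<le> q"
proof -
  obtain p r where p: "prime p" "r > 0" "q = p ^ r"
    using prime_power_q unfolding prime_power_def by blast
  thus ?thesis using prime_ge_2_nat[OF p(1)] self_le_power[of p r] by simp
qed

lemma n_pos: "0 < n"
proof (rule ccontr)
  assume "\<not> 0 < n"
  hence "card (UNIV :: 'a set) = 1" using card_UNIV by simp
  moreover have "card {0 :: 'a, 1} \<le> card (UNIV :: 'a set)" by (rule card_mono) auto
  ultimately show False by simp
qed

lemma q_power_pred_mult: "q ^ (n - 1) * q = q ^ n"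
  using n_pos by (cases n) simp_all

lemma power_q_power_add: "((x::'a) + y) ^ (q ^ i) = x ^ (q ^ i) + y ^ (q ^ i)"
  using q_power_eq_CHAR_power[of i] freshmans_dream'[OF prime_CHAR] by blast

lemma power_q_power_diff: "((x::'a) - y) ^ (q ^ i) = x ^ (q ^ i) - y ^ (q ^ i)"
  using power_q_power_add[of "x - y" y i] by simp

lemma power_q_power_sum: "(\<Sum>j\<in>A. f j :: 'a) ^ (q ^ i) = (\<Sum>j\<in>A. f j ^ (q ^ i))"
  using q_power_eq_CHAR_power[of i] freshmans_dream_sum'[OF prime_CHAR] by blast

lemma power_q_power_n: "(x::'a) ^ (q ^ n) = x"
  using finite_field_power_card_eq_self[of x] card_UNIV by simp

lemma Fq_power_q_power: "c \<in> Fq q \<Longrightarrow> (c::'a) ^ (q ^ i) = c"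
  by (induction i) (simp_all add: Fq_def power_mult mult.commute[of q])

lemma Fq_0: "(0::'a) \<in> Fq q"
  using q_ge_2 by (simp add: Fq_def)

lemma Fq_1: "(1::'a) \<in> Fq q"
  by (simp add: Fq_def)

lemma Fq_add: "x \<in> Fq q \<Longrightarrow> y \<in> Fq q \<Longrightarrow> (x::'a) + y \<in> Fq q"
  using power_q_power_add[of x y 1] by (simp add: Fq_def)

lemma Fq_diff: "x \<in> Fq q \<Longrightarrow> y \<in> Fq q \<Longrightarrow> (x::'a) - y \<in> Fq q"
  using power_q_power_diff[of x y 1] by (simp add: Fq_def)

lemma Fq_mult: "x \<in> Fq q \<Longrightarrow> y \<in> Fq q \<Longrightarrow> (x::'a) * y \<in> Fq q"
  by (simp add: Fq_def power_mult_distrib)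

lemma Fq_linear_linpoly: "Fq_linear q (linpoly q (c :: nat \<Rightarrow> 'a) m)"
  by (simp add: Fq_linear_def linpoly_def power_q_power_add power_mult_distrib Fq_power_q_power
      distrib_left sum.distrib sum_distrib_left mult_ac)

lemma Fq_linear_power_q_power_plus_linpoly:
  "Fq_linear q (\<lambda>x::'a. x ^ (q ^ i) + linpoly q c m x)"
  using Fq_linear_linpoly[of c m]
  by (simp add: Fq_linear_def power_q_power_add power_mult_distrib Fq_power_q_power distrib_left)

text \<open>\<open>\<bbbF>\<^sub>q\<close> is the kernel of the additive map \<open>x \<mapsto> x\<^sup>q - x\<close>, whose image consists of roots
  of the trace \<open>\<Sum>j<n. y\<^bsup>q\<^sup>j\<^esup>\<close>; so \<open>q\<^sup>n \<le> q\<^bsup>n-1\<^esup> \<cdot> |\<bbbF>\<^sub>q|\<close>.\<close>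
lemma card_Fq: "card (Fq q :: 'a set) = q"
proof (rule antisym)
  define c :: "nat \<Rightarrow> 'a" where "c = (\<lambda>j. if j = 0 then -1 else 1)"
  have "Fq q = {x::'a. linpoly q c 2 x = 0}"
    by (auto simp: Fq_def linpoly_def c_def numeral_2_eq_2)
  also have "card \<dots> \<le> q ^ (2 - 1)"
    by (rule card_linpoly_roots_le[of q 1]) (use q_ge_2 in \<open>auto simp: c_def\<close>)
  finally show "card (Fq q :: 'a set) \<le> q" by simp
next
  define T :: "'a \<Rightarrow> 'a" where "T = (\<lambda>x. x ^ q - x)"
  have T_add: "T (x + y) = T x + T y" for x y
    using power_q_power_add[of x y 1] by (simp add: T_def)
  have "range T \<subseteq> {y. linpoly q (\<lambda>_. 1) n y = 0}"
  proof clarify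
    fix x :: 'a
    have "linpoly q (\<lambda>_. 1) n (T x) = (\<Sum>j<n. x ^ (q ^ Suc j) - x ^ (q ^ j))"
      by (simp add: linpoly_def T_def power_q_power_diff flip: power_mult)
    also have "\<dots> = x ^ (q ^ n) - x ^ (q ^ 0)" by (rule sum_lessThan_telescope)
    also have "\<dots> = 0" by (simp add: power_q_power_n)
    finally show "linpoly q (\<lambda>_. 1) n (T x) = 0" .
  qed
  hence "card (range T) \<le> card {y::'a. linpoly q (\<lambda>_. 1) n y = 0}" by (intro card_mono) simp_all
  also have "\<dots> \<le> q ^ (n - 1)"
    by (rule card_linpoly_roots_le[of q 0]) (use q_ge_2 n_pos in auto)
  finally have range_T: "card (range T) \<le> q ^ (n - 1)" .
  have "q ^ (n - 1) * q = q ^ n" by (rule q_power_pred_mult)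
  also have "q ^ n \<le> card (range T) * card {x. T x = 0}"
    using card_UNIV_le_card_range_mult_card_kernel[of T] T_add card_UNIV by simp
  also have "\<dots> \<le> q ^ (n - 1) * card {x. T x = 0}" using range_T by (rule mult_le_mono1)
  also have "{x. T x = 0} = Fq q" by (auto simp: T_def Fq_def)
  finally show "q \<le> card (Fq q :: 'a set)" using q_ge_2 by simp
qed

lemma Fq_span_base: "(s::'a) \<in> S \<Longrightarrow> s \<in> Fq_span q S"
  unfolding Fq_span_def using Fq_1
  by (intro CollectI exI[of _ "{s}"] exI[of _ "\<lambda>_. 1"]) auto

lemma Fq_span_add:
  assumes "(x::'a) \<in> Fq_span q S" "y \<in> Fq_span q S"
  shows "x + y \<in> Fq_span q S"
proof -
  obtain T1 c1 where 1: "finite T1" "T1 \<subseteq> S" "\<forall>t\<in>T1. c1 t \<in> Fq q" "x = (\<Sum>t\<in>T1. c1 t * t)"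
    using assms(1) unfolding Fq_span_def by blast
  obtain T2 c2 where 2: "finite T2" "T2 \<subseteq> S" "\<forall>t\<in>T2. c2 t \<in> Fq q" "y = (\<Sum>t\<in>T2. c2 t * t)"
    using assms(2) unfolding Fq_span_def by blast
  define c where "c t = (if t \<in> T1 then c1 t else 0) + (if t \<in> T2 then c2 t else 0)" for t
  have "(\<Sum>t\<in>T1 \<union> T2. (if t \<in> T1 then c1 t else 0) * t) = x"
    unfolding 1(4) by (rule sum.mono_neutral_cong_right) (use 1 2 in auto)
  moreover have "(\<Sum>t\<in>T1 \<union> T2. (if t \<in> T2 then c2 t else 0) * t) = y"
    unfolding 2(4) by (rule sum.mono_neutral_cong_right) (use 1 2 in auto)
  ultimately have "x + y = (\<Sum>t\<in>T1 \<union> T2. c t * t)"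
    unfolding c_def distrib_right sum.distrib by simp
  moreover have "\<forall>t\<in>T1 \<union> T2. c t \<in> Fq q"
    using 1(3) 2(3) Fq_0 Fq_add unfolding c_def by auto
  ultimately show ?thesis unfolding Fq_span_def using 1 2
    by (intro CollectI exI[of _ "T1 \<union> T2"] exI[of _ c]) auto
qed

lemma Fq_span_mult:
  assumes "c0 \<in> Fq q" "(x::'a) \<in> Fq_span q S"
  shows "c0 * x \<in> Fq_span q S"
proof -
  obtain T c where 1: "finite T" "T \<subseteq> S" "\<forall>t\<in>T. c t \<in> Fq q" "x = (\<Sum>t\<in>T. c t * t)"
    using assms(2) unfolding Fq_span_def by blast
  have "c0 * x = (\<Sum>t\<in>T. (c0 * c t) * t)" unfolding 1(4) by (simp add: sum_distrib_left mult_ac)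
  moreover have "\<forall>t\<in>T. c0 * c t \<in> Fq q" using 1(3) assms(1) Fq_mult by auto
  ultimately show ?thesis unfolding Fq_span_def using 1
    by (intro CollectI exI[of _ T] exI[of _ "\<lambda>t. c0 * c t"]) auto
qed

lemma Fq_span_sum:
  assumes "finite A" "\<forall>i\<in>A. c i \<in> Fq q \<and> (v i :: 'a) \<in> Fq_span q S"
  shows "(\<Sum>i\<in>A. c i * v i) \<in> Fq_span q S"
  using assms by (induction A rule: finite_induct) (auto intro: Fq_span_0 Fq_span_add Fq_span_mult)

lemma Fq_span_insert_subset:
  "Fq_span q (insert (x::'a) S) \<subseteq> (\<lambda>(c, y). c * x + y) ` (Fq q \<times> Fq_span q S)"
proof
  fix z assume "z \<in> Fq_span q (insert x S)"
  then obtain T c where 1: "finite T" "T \<subseteq> insert x S" "\<forall>t\<in>T. c t \<in> Fq q" "z = (\<Sum>t\<in>T. c t * t)"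
    unfolding Fq_span_def by blast
  have y: "(\<Sum>t\<in>T - {x}. c t * t) \<in> Fq_span q S" unfolding Fq_span_def using 1
    by (intro CollectI exI[of _ "T - {x}"] exI[of _ c]) auto
  show "z \<in> (\<lambda>(c, y). c * x + y) ` (Fq q \<times> Fq_span q S)"
  proof (cases "x \<in> T")
    case True
    hence "z = c x * x + (\<Sum>t\<in>T - {x}. c t * t)" unfolding 1(4) using 1(1)
      by (simp add: sum.remove)
    thus ?thesis using y True 1(3) by force
  next
    case False
    hence "z = 0 * x + (\<Sum>t\<in>T - {x}. c t * t)" unfolding 1(4) by simp
    thus ?thesis using y Fq_0 by force
  qed
qed

lemma card_Fq_span_le: "card (Fq_span q (set (xs :: 'a list))) \<le> q ^ length xs"
proof (induction xs)
  case Nil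
  have "Fq_span q (set ([]::'a list)) \<subseteq> {0}" unfolding Fq_span_def by auto
  thus ?case using card_mono[of "{0::'a}"] by simp
next
  case (Cons x xs)
  have "card (Fq_span q (set (x # xs)))
      \<le> card ((\<lambda>(c, y). c * x + y) ` ((Fq q :: 'a set) \<times> Fq_span q (set xs)))"
    using Fq_span_insert_subset[of x "set xs"] by (intro card_mono) auto
  also have "\<dots> \<le> card ((Fq q :: 'a set) \<times> Fq_span q (set xs))" by (rule card_image_le) simp
  also have "\<dots> \<le> q * q ^ length xs" using Cons by (simp add: card_cartesian_product card_Fq)
  finally show ?case by simp
qed

lemma card_Fq_combinations:
  assumes indep: "Fq_lin_indep q n (g :: nat \<Rightarrow> 'a)" and "m \<le> n"
  shows "card ((\<lambda>c. \<Sum>i<m. c i * g i) ` (PiE {..<m} (\<lambda>_. Fq q))) = q ^ m"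
proof -
  have "inj_on (\<lambda>c. \<Sum>i<m. c i * g i) (PiE {..<m} (\<lambda>_. Fq q))"
  proof (rule inj_onI)
    fix c c' assume c: "c \<in> PiE {..<m} (\<lambda>_. Fq q)" and c': "c' \<in> PiE {..<m} (\<lambda>_. Fq q)"
      and eq: "(\<Sum>i<m. c i * g i) = (\<Sum>i<m. c' i * g i)"
    define d where "d i = (if i < m then c i - c' i else 0)" for i
    have "(\<Sum>i<n. d i * g i) = (\<Sum>i<m. (c i - c' i) * g i)"
      by (rule sum.mono_neutral_cong_right) (use \<open>m \<le> n\<close> in \<open>auto simp: d_def\<close>)
    also have "\<dots> = 0" using eq by (simp add: left_diff_distrib sum_subtractf)
    finally have sum_0: "(\<Sum>i<n. d i * g i) = 0" .
    have "\<forall>i<n. d i \<in> Fq q"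
      using c c' Fq_diff Fq_0 by (auto simp: d_def PiE_def Pi_def)
    with sum_0 have d_0: "\<forall>i<n. d i = 0" using indep unfolding Fq_lin_indep_def by blast
    have "c i = c' i" if "i < m" for i
      using d_0[rule_format, of i] that \<open>m \<le> n\<close> by (simp add: d_def)
    thus "c = c'" using c c' by (intro PiE_ext) auto
  qed
  hence "card ((\<lambda>c. \<Sum>i<m. c i * g i) ` (PiE {..<m} (\<lambda>_. Fq q)))
      = card (PiE {..<m} (\<lambda>_. (Fq q :: 'a set)))"
    by (rule card_image)
  thus ?thesis by (simp add: card_PiE card_Fq)
qed

lemma Fq_combinations_eq_UNIV:
  assumes "Fq_lin_indep q n (g :: nat \<Rightarrow> 'a)"
  shows "(\<lambda>c. \<Sum>i<n. c i * g i) ` (PiE {..<n} (\<lambda>_. Fq q)) = UNIV"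
  by (rule card_subset_eq) (use card_Fq_combinations[OF assms le_refl] card_UNIV in auto)

lemma card_range_le_power_Fq_dim:
  assumes "Fq_lin_indep q n (g :: nat \<Rightarrow> 'a)" and h: "Fq_linear q h"
  shows "card (range h) \<le> q ^ Fq_dim q {h (g i) | i. i < n}"
proof -
  let ?S = "{h (g i) | i. i < n}"
  obtain xs where xs: "length xs = Fq_dim q ?S" "Fq_span q (set xs) = Fq_span q ?S"
    using Fq_dim_spanning_list[of ?S] by auto
  have "range h \<subseteq> Fq_span q ?S"
  proof
    fix y assume "y \<in> range h"
    then obtain x where y: "y = h x" by blast
    have "x \<in> (\<lambda>c. \<Sum>i<n. c i * g i) ` PiE {..<n} (\<lambda>_. Fq q)"
      unfolding Fq_combinations_eq_UNIV[OF assms(1)] ..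
    then obtain c where c: "c \<in> PiE {..<n} (\<lambda>_. Fq q)" "y = h (\<Sum>i<n. c i * g i)"
      using y by blast
    have "y = (\<Sum>i<n. c i * h (g i))" using Fq_linear_sum[OF h] c by auto
    also have "\<dots> \<in> Fq_span q ?S"
      by (rule Fq_span_sum) (use c(1) in \<open>auto intro!: Fq_span_base\<close>)
    finally show "y \<in> Fq_span q ?S" .
  qed
  hence "card (range h) \<le> card (Fq_span q (set xs))" using xs by (intro card_mono) simp_all
  also have "\<dots> \<le> q ^ Fq_dim q ?S" using card_Fq_span_le[of xs] xs(1) by simp
  finally show ?thesis .
qed

text \<open>Raising \<open>x\<^bsup>q\<^bsup>n-1\<^esup>\<^esup> + L(x)\<close> to the \<open>q\<close>-th power gives \<open>x + L(x)\<^sup>q\<close>, a nonzero linearized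
  polynomial of \<open>q\<close>-degree at most \<open>k\<close>.\<close>
lemma card_roots_top_plus_linpoly_le:
  "card {x::'a. x ^ (q ^ (n - 1)) + linpoly q d k x = 0} \<le> q ^ k"
proof -
  define e :: "nat \<Rightarrow> 'a" where "e = case_nat 1 (\<lambda>j. d j ^ q)"
  have frob: "(x ^ (q ^ (n - 1)) + linpoly q d k x) ^ q = linpoly q e (Suc k) x" for x :: 'a
  proof -
    have "(x ^ (q ^ (n - 1))) ^ q = x"
      by (simp only: power_mult[symmetric] q_power_pred_mult power_q_power_n)
    moreover have "(linpoly q d k x) ^ q = (\<Sum>j<k. (d j * x ^ (q ^ j)) ^ q)"
      using power_q_power_sum[of "\<lambda>j. d j * x ^ (q ^ j)" "{..<k}" 1] by (simp add: linpoly_def)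
    moreover have "(d j * x ^ (q ^ j)) ^ q = d j ^ q * x ^ (q ^ Suc j)" for j
      by (simp add: power_mult_distrib power_Suc2 del: power_Suc flip: power_mult)
    moreover have "linpoly q e (Suc k) x = x + (\<Sum>j<k. d j ^ q * x ^ (q ^ Suc j))"
      unfolding linpoly_def sum.lessThan_Suc_shift by (simp add: e_def)
    ultimately show ?thesis using power_q_power_add[of _ _ 1] by simp
  qed
  have "{x::'a. x ^ (q ^ (n - 1)) + linpoly q d k x = 0} \<subseteq> {x. linpoly q e (Suc k) x = 0}"
  proof clarify
    fix x :: 'a assume "x ^ (q ^ (n - 1)) + linpoly q d k x = 0"
    hence "linpoly q e (Suc k) x = 0 ^ q" by (simp flip: frob)
    thus "linpoly q e (Suc k) x = 0" using q_ge_2 by simp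
  qed
  hence "card {x::'a. x ^ (q ^ (n - 1)) + linpoly q d k x = 0} \<le> card {x. linpoly q e (Suc k) x = 0}"
    by (intro card_mono) simp_all
  also have "\<dots> \<le> q ^ k"
    using card_linpoly_roots_le[of q 0 "Suc k" e] q_ge_2 by (simp add: e_def)
  finally show ?thesis .
qed

lemma Fq_dim_top_plus_linpoly_values_ge:
  assumes "Fq_lin_indep q n (g :: nat \<Rightarrow> 'a)"
  shows "n - k \<le> Fq_dim q {g i ^ (q ^ (n - 1)) + linpoly q d k (g i) | i. i < n}"
proof -
  define h where "h x = x ^ (q ^ (n - 1)) + linpoly q d k x" for x :: 'a
  have h: "Fq_linear q h"
    unfolding h_def by (rule Fq_linear_power_q_power_plus_linpoly)
  have "q ^ n \<le> card (range h) * card {x. h x = 0}"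
    using card_UNIV_le_card_range_mult_card_kernel[of h] h card_UNIV by (simp add: Fq_linear_def)
  also have "\<dots> \<le> q ^ Fq_dim q {h (g i) | i. i < n} * q ^ k"
    using card_range_le_power_Fq_dim[OF assms h] card_roots_top_plus_linpoly_le[of d k]
    by (intro mult_le_mono) (simp_all add: h_def)
  finally have "q ^ n \<le> q ^ (Fq_dim q {h (g i) | i. i < n} + k)" by (simp add: power_add)
  moreover have "1 < q" using q_ge_2 by simp
  ultimately have "n \<le> Fq_dim q {h (g i) | i. i < n} + k" using power_le_imp_le_exp by blast
  thus ?thesis by (simp add: h_def)
qed

text \<open>A linearized polynomial of \<open>q\<close>-degree below \<open>k\<close> that vanishes on \<open>g\<^sub>0, \<dots>, g\<^bsub>k-1\<^esub>\<close>
  vanishes on all their \<open>q\<^sup>k\<close> combinations, too many roots unless it is zero.\<close>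
lemma linpoly_vanishing_on_basis:
  assumes "Fq_lin_indep q n (g :: nat \<Rightarrow> 'a)" and "k \<le> n"
    and zero: "\<And>i. i < k \<Longrightarrow> linpoly q d k (g i) = 0" and "j < k"
  shows "d j = 0"
proof (rule ccontr)
  assume "d j \<noteq> 0"
  let ?W = "(\<lambda>c :: nat \<Rightarrow> 'a. \<Sum>i<k. c i * g i) ` PiE {..<k} (\<lambda>_. Fq q)"
  have "?W \<subseteq> {x. linpoly q d k x = 0}"
  proof clarify
    fix c :: "nat \<Rightarrow> 'a" assume c: "c \<in> PiE {..<k} (\<lambda>_. Fq q)"
    have "linpoly q d k (\<Sum>i<k. c i * g i) = (\<Sum>i<k. c i * linpoly q d k (g i))"
      using c by (intro Fq_linear_sum[OF Fq_linear_linpoly]) auto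
    also have "\<dots> = 0" using zero by simp
    finally show "linpoly q d k (\<Sum>i<k. c i * g i) = 0" .
  qed
  hence "card ?W \<le> card {x. linpoly q d k x = 0}" by (intro card_mono) simp_all
  hence "q ^ k \<le> card {x. linpoly q d k x = 0}"
    using card_Fq_combinations[OF assms(1,2)] by simp
  also have "\<dots> \<le> q ^ (k - 1)"
    using card_linpoly_roots_le[of q j k d] q_ge_2 \<open>j < k\<close> \<open>d j \<noteq> 0\<close> by simp
  also have "\<dots> < q ^ k" using q_ge_2 \<open>j < k\<close> by (intro power_strict_increasing) auto
  finally show False by simp
qed

text \<open>Interpolation: evaluation at \<open>g\<^sub>0, \<dots>, g\<^bsub>k-1\<^esub>\<close> is an injective self-map of the finite set
  of coefficient vectors supported below \<open>k\<close>, hence surjective.\<close>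
lemma linpoly_interpolation:
  assumes indep: "Fq_lin_indep q n (g :: nat \<Rightarrow> 'a)" and "k \<le> n"
  obtains a where "qdeg_less a k" "\<And>i. i < k \<Longrightarrow> linpoly q a k (g i) = t i"
proof -
  define D where "D = {f :: nat \<Rightarrow> 'a. \<forall>i\<ge>k. f i = 0}"
  define eval where "eval a = (\<lambda>i. if i < k then linpoly q a k (g i) else 0)" for a
  have "D \<subseteq> (\<lambda>f i. if i < k then f i else 0) ` PiE {..<k} (\<lambda>_. UNIV)"
  proof
    fix f assume "f \<in> D"
    hence "f = (\<lambda>i. if i < k then restrict f {..<k} i else 0)"
      by (auto simp: D_def fun_eq_iff not_less)
    moreover have "restrict f {..<k} \<in> PiE {..<k} (\<lambda>_. UNIV)" by simp
    ultimately show "f \<in> (\<lambda>f i. if i < k then f i else 0) ` PiE {..<k} (\<lambda>_. UNIV)" by blast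
  qed
  hence "finite D" by (rule finite_subset) (simp add: finite_PiE)
  moreover have "eval ` D \<subseteq> D" by (auto simp: eval_def D_def)
  moreover have "inj_on eval D"
  proof (rule inj_onI)
    fix a1 a2 assume "a1 \<in> D" "a2 \<in> D" and eq: "eval a1 = eval a2"
    have "linpoly q (\<lambda>j. a1 j - a2 j) k (g i) = 0" if "i < k" for i
      using fun_cong[OF eq, of i] that by (simp add: eval_def linpoly_diff)
    hence diff_0: "a1 j - a2 j = 0" if "j < k" for j
      using linpoly_vanishing_on_basis[OF indep \<open>k \<le> n\<close>] that by blast
    show "a1 = a2"
    proof
      fix j show "a1 j = a2 j"
        using diff_0[of j] \<open>a1 \<in> D\<close> \<open>a2 \<in> D\<close> by (cases "j < k") (auto simp: D_def)
    qed
  qed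
  ultimately have "eval ` D = D" by (rule endo_inj_surj)
  moreover have "(\<lambda>i. if i < k then t i else 0) \<in> D" by (simp add: D_def)
  ultimately have "(\<lambda>i. if i < k then t i else 0) \<in> eval ` D" by simp
  then obtain a where eval_a: "(\<lambda>i. if i < k then t i else 0) = eval a" and "a \<in> D"
    by (rule imageE)
  have "qdeg_less a k" using \<open>a \<in> D\<close> by (simp add: D_def qdeg_less_def)
  moreover have "linpoly q a k (g i) = t i" if "i < k" for i
    using fun_cong[OF eval_a, of i] that by (simp add: eval_def)
  ultimately show ?thesis by (rule that)
qed

lemma rank_dist_gabidulin_ge:
  assumes "Fq_lin_indep q n (g :: nat \<Rightarrow> 'a)" and "qdeg_less b k"
    and "c \<in> gabidulin q n k g"
  shows "n - k \<le> rank_dist q n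
           (\<lambda>i. if i < n then (g i) ^ (q ^ (n - 1)) + lin_eval q b (g i) else 0) c"
proof -
  obtain a where a: "qdeg_less a k" "c = (\<lambda>i. if i < n then lin_eval q a (g i) else 0)"
    using assms(3) unfolding gabidulin_def by blast
  have "{(if i < n then (g i) ^ (q ^ (n - 1)) + lin_eval q b (g i) else 0) - c i | i. i < n}
      = {g i ^ (q ^ (n - 1)) + linpoly q (\<lambda>j. b j - a j) k (g i) | i. i < n}"
    unfolding setcompr_eq_image
    by (intro image_cong) (simp_all add: a(2) lin_eval_eq_linpoly[OF a(1)]
        lin_eval_eq_linpoly[OF assms(2)] linpoly_diff add_diff_eq)
  thus ?thesis unfolding rank_dist_def using Fq_dim_top_plus_linpoly_values_ge[OF assms(1)] by simp
qed

text \<open>The codeword interpolating the received word at \<open>g\<^sub>0, \<dots>, g\<^bsub>k-1\<^esub>\<close> leaves only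
  \<open>n - k\<close> nonzero differences.\<close>
lemma gabidulin_rank_dist_le:
  assumes "Fq_lin_indep q n (g :: nat \<Rightarrow> 'a)" and "k \<le> n" and "qdeg_less b k"
  obtains c where "c \<in> gabidulin q n k g"
    and "rank_dist q n
           (\<lambda>i. if i < n then (g i) ^ (q ^ (n - 1)) + lin_eval q b (g i) else 0) c \<le> n - k"
proof -
  define \<sigma> where "\<sigma> = (\<lambda>i. if i < n then (g i) ^ (q ^ (n - 1)) + lin_eval q b (g i) else 0)"
  obtain a where a: "qdeg_less a k" "\<And>i. i < k \<Longrightarrow> linpoly q a k (g i) = \<sigma> i"
    using linpoly_interpolation[OF assms(1,2)] by blast
  define c where "c = (\<lambda>i. if i < n then lin_eval q a (g i) else 0)"
  have "{i. a i \<noteq> 0} \<subseteq> {..<k}" using a(1) by (auto simp: qdeg_less_def intro: leI)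
  hence "finite {i. a i \<noteq> 0}" by (rule finite_subset) simp
  hence c_code: "c \<in> gabidulin q n k g" using a(1) unfolding gabidulin_def c_def by blast
  have "Fq_dim q {\<sigma> i - c i | i. i < n} \<le> n - k"
  proof -
    let ?L = "map (\<lambda>i. \<sigma> i - c i) [k..<n]"
    have zero: "\<sigma> i - c i = 0" if "i < k" for i
      using that assms(2) a(2)[of i] by (simp add: c_def lin_eval_eq_linpoly[OF a(1)])
    have "insert 0 {\<sigma> i - c i | i. i < n} = insert 0 (set ?L)"
    proof (intro equalityI subsetI)
      fix x assume "x \<in> insert 0 {\<sigma> i - c i | i. i < n}"
      then consider "x = 0" | i where "i < n" "x = \<sigma> i - c i" by blast
      thus "x \<in> insert 0 (set ?L)"
      proof cases
        case (2 i)
        show ?thesis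
        proof (cases "i < k")
          case False
          hence "\<sigma> i - c i \<in> (\<lambda>i. \<sigma> i - c i) ` {k..<n}" using \<open>i < n\<close> by simp
          thus ?thesis using 2 by simp
        qed (use zero 2 in simp)
      qed simp
    next
      fix x assume "x \<in> insert 0 (set ?L)"
      thus "x \<in> insert 0 {\<sigma> i - c i | i. i < n}" by auto
    qed
    hence "Fq_span q (set ?L) = Fq_span q {\<sigma> i - c i | i. i < n}"
      using Fq_span_insert_0[of q "set ?L"] Fq_span_insert_0[of q "{\<sigma> i - c i | i. i < n}"] by simp
    from Fq_dim_le_length[OF this] show ?thesis by simp
  qed
  thus ?thesis by (intro that[OF c_code]) (simp add: rank_dist_def \<sigma>_def)
qed

end

theorem proposition4:
  fixes q n k :: nat and g :: "nat \<Rightarrow> 'a::{field,finite}" and b :: "nat \<Rightarrow> 'a"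
  assumes "prime_power q"
    and "card (UNIV :: 'a set) = q ^ n"
    and "1 \<le> k" and "k < n"
    and "Fq_lin_indep q n g"
    and "finite {i. b i \<noteq> 0}" and "qdeg_less b k"
  shows "rank_dist_code q n
           (\<lambda>i. if i < n then (g i) ^ (q ^ (n - 1)) + lin_eval q b (g i) else 0)
           (gabidulin q n k g) = n - k"
proof -
  interpret Fqn_field q n "TYPE('a)"
    using assms(1,2) by unfold_locales
  obtain c0 where "c0 \<in> gabidulin q n k g"
    and "rank_dist q n (\<lambda>i. if i < n then (g i) ^ (q ^ (n - 1)) + lin_eval q b (g i) else 0) c0
         \<le> n - k"
    using gabidulin_rank_dist_le[OF assms(5) less_imp_le[OF assms(4)] assms(7)] by blast
  thus ?thesis
    using rank_dist_gabidulin_ge[OF assms(5,7)] by (intro rank_dist_code_eqI) auto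
qed

end
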